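(* Let $\mathcal{G}=(V,L)$ be a finite connected undirected graph with monitor set $M$ and non-monitor set $N=V\setminus M$, $\sigma=|N|$, let $S\subseteq N$ be nonempty and let $q$ be an integer with $0\le q\le\sigma-1$. Then the following are equivalent: (1) for every set $V'\subseteq N$ with $|V'|\le q$, each connected component of $\mathcal{G}-V'$ that contains a node of $S$ contains a monitor; (2) $\Gamma_{\mathcal{G}^*}(S,m')\ge q+1$.
   Context: $\mathcal{G}-V'$ denotes deletion of the nodes of $V'$ and incident links. $\mathcal{N}(M)$ is the set of non-monitors adjacent to at least one monitor. $\mathcal{G}^*$ is obtained from $\mathcal{G}$ by deleting all monitors, adding a virtual node $m'$, and linking $m'$ to every node of $\mathcal{N}(M)$. For nodes $s,t$ of a graph $\mathcal{H}$, $C_{\mathcal{H}}(s,t)$ is a minimum-cardinality set of nodes (other than $s,t$) whose deletion destroys all $s$–$t$ paths; if $s,t$ are adjacent, $C_{\mathcal{H}}(s,t):=V(\mathcal{H})\setminus\{t\}$. $\Gamma_{\mathcal{H}}(S,m):=\min_{w\in S}|C_{\mathcal{H}}(w,m)|$. *)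

theory Defs
  imports Main
begin

definition ugraph :: "'a set \<Rightarrow> ('a \<Rightarrow> 'a \<Rightarrow> bool) \<Rightarrow> bool" where
  "ugraph W E \<longleftrightarrow> finite W \<and> (\<forall>u v. E u v \<longrightarrow> E v u) \<and> (\<forall>u. \<not> E u u)
     \<and> (\<forall>u v. E u v \<longrightarrow> u \<in> W \<and> v \<in> W)"

definition reach :: "'a set \<Rightarrow> ('a \<Rightarrow> 'a \<Rightarrow> bool) \<Rightarrow> 'a \<Rightarrow> 'a \<Rightarrow> bool" where
  "reach W E u v \<longleftrightarrow> u \<in> W \<and> (u, v) \<in> {(x, y). x \<in> W \<and> y \<in> W \<and> E x y}\<^sup>*"

definition connected_graph :: "'a set \<Rightarrow> ('a \<Rightarrow> 'a \<Rightarrow> bool) \<Rightarrow> bool" where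
  "connected_graph W E \<longleftrightarrow> (\<forall>u\<in>W. \<forall>v\<in>W. reach W E u v)"

definition min_cut :: "'a set \<Rightarrow> ('a \<Rightarrow> 'a \<Rightarrow> bool) \<Rightarrow> 'a \<Rightarrow> 'a \<Rightarrow> nat" where
  "min_cut W E s t =
     (if E s t then card (W - {t})
      else (LEAST k. \<exists>C. C \<subseteq> W - {s, t} \<and> card C = k \<and> \<not> reach (W - C) E s t))"

definition Gamma :: "'a set \<Rightarrow> ('a \<Rightarrow> 'a \<Rightarrow> bool) \<Rightarrow> 'a set \<Rightarrow> 'a \<Rightarrow> nat" where
  "Gamma W E S m = Min ((\<lambda>w. min_cut W E w m) ` S)"

definition mon_nbrs :: "'a set \<Rightarrow> ('a \<Rightarrow> 'a \<Rightarrow> bool) \<Rightarrow> 'a set \<Rightarrow> 'a set" where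
  "mon_nbrs V E M = {v \<in> V - M. \<exists>m\<in>M. E v m}"

text \<open>G*: monitors deleted, virtual node m' = None linked to every node of N(M);
  the original non-monitors v are represented as Some v.\<close>
definition star_V :: "'a set \<Rightarrow> 'a set \<Rightarrow> 'a option set" where
  "star_V V M = insert None (Some ` (V - M))"

definition star_E :: "'a set \<Rightarrow> ('a \<Rightarrow> 'a \<Rightarrow> bool) \<Rightarrow> 'a set \<Rightarrow> 'a option \<Rightarrow> 'a option \<Rightarrow> bool" where
  "star_E V E M x y = (case (x, y) of
       (Some u, Some v) \<Rightarrow> u \<in> V - M \<and> v \<in> V - M \<and> E u v
     | (None, Some v) \<Rightarrow> v \<in> mon_nbrs V E M
     | (Some u, None) \<Rightarrow> u \<in> mon_nbrs V E M
     | (None, None) \<Rightarrow> False)"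

end

theory Submission
  imports Defs
begin

text \<open>Deleting a set \<open>V'\<close> of non-monitors leaves \<open>s\<close> connected to some monitor exactly when
  \<open>Some s\<close> still reaches the virtual node \<open>None\<close> in \<open>\<G>\<^sup>* - V'\<close>, because contracting all
  monitors to one node preserves exactly this kind of reachability. Hence condition (1) for a
  fixed \<open>s\<close> says that no set of at most \<open>q\<close> nodes separates \<open>Some s\<close> from \<open>None\<close> in \<open>\<G>\<^sup>*\<close>,
  i.e. that the minimum vertex cut exceeds \<open>q\<close>; minimising over \<open>s \<in> S\<close> gives (2).\<close>

lemma rtrancl_map:
  assumes "\<And>x y. (x, y) \<in> r \<Longrightarrow> f x = f y \<or> (f x, f y) \<in> s"
    and "(x, y) \<in> r\<^sup>*"
  shows "(f x, f y) \<in> s\<^sup>*"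
  using assms(2)
proof (induction rule: rtrancl_induct)
  case (step y z)
  then show ?case
    using assms(1) by (metis rtrancl.rtrancl_into_rtrancl)
qed simp

lemma less_min_cut_iff:
  assumes "\<not> E s t" and "s \<noteq> t"
  shows "k < min_cut W E s t \<longleftrightarrow> (\<forall>C \<subseteq> W - {s, t}. card C \<le> k \<longrightarrow> reach (W - C) E s t)"
proof -
  let ?cut = "\<lambda>n. \<exists>C. C \<subseteq> W - {s, t} \<and> card C = n \<and> \<not> reach (W - C) E s t"
  have "x = s" if "(s, x) \<in> {(x, y). x \<in> W - (W - {s, t}) \<and> y \<in> W - (W - {s, t}) \<and> E x y}\<^sup>*"
    for x
    using that
  proof (induction rule: rtrancl_induct)
    case (step y z)
    then show ?case using assms(1) by auto
  qed simp
  then have "\<not> reach (W - (W - {s, t})) E s t"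
    using assms(2) unfolding reach_def by blast
  then have "?cut (card (W - {s, t}))" by blast
  then have least: "?cut (LEAST n. ?cut n)" by (rule LeastI)
  have "k < (LEAST n. ?cut n) \<longleftrightarrow> (\<forall>n \<le> k. \<not> ?cut n)"
  proof
    show "\<forall>n \<le> k. \<not> ?cut n" if "k < (LEAST n. ?cut n)"
      using that not_less_Least le_less_trans by blast
    show "k < (LEAST n. ?cut n)" if "\<forall>n \<le> k. \<not> ?cut n"
      using that least not_less by blast
  qed
  then show ?thesis
    using assms(1) unfolding min_cut_def by auto
qed

lemma reach_star_if_reach_monitor:
  assumes "ugraph V E" and "C \<subseteq> V - M" and "s \<notin> M" and "m \<in> M"
    and "reach (V - C) E s m"
  shows "reach (star_V V M - Some ` C) (star_E V E M) (Some s) None"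
proof -
  let ?f = "\<lambda>v. if v \<in> M then None else Some v"
  let ?R = "{(x, y). x \<in> V - C \<and> y \<in> V - C \<and> E x y}"
  let ?W = "star_V V M - Some ` C"
  let ?Q = "{(x, y). x \<in> ?W \<and> y \<in> ?W \<and> star_E V E M x y}"
  have sym: "E y x" if "E x y" for x y
    using assms(1) that unfolding ugraph_def by blast
  have "?f x = ?f y \<or> (?f x, ?f y) \<in> ?Q" if "(x, y) \<in> ?R" for x y
    using that sym[of x y]
    by (auto simp: star_V_def star_E_def mon_nbrs_def)
  moreover have "(s, m) \<in> ?R\<^sup>*"
    using assms(5) unfolding reach_def by simp
  ultimately have "(?f s, ?f m) \<in> ?Q\<^sup>*"
    by (rule rtrancl_map)
  moreover have "Some s \<in> ?W"
    using assms(3,5) unfolding reach_def star_V_def by auto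
  ultimately show ?thesis
    using assms(3,4) unfolding reach_def by simp
qed

lemma reach_monitor_if_reach_star:
  assumes "M \<subseteq> V" and "C \<subseteq> V - M"
    and "reach (star_V V M - Some ` C) (star_E V E M) (Some s) None"
  shows "\<exists>m\<in>M. reach (V - C) E s m"
proof -
  let ?R = "{(x, y). x \<in> V - C \<and> y \<in> V - C \<and> E x y}"
  let ?W = "star_V V M - Some ` C"
  let ?Q = "{(x, y). x \<in> ?W \<and> y \<in> ?W \<and> star_E V E M x y}"
  txt \<open>The virtual node forgets which monitor was entered, so the walk can only be
    pulled back up to its first visit of \<open>None\<close>.\<close>
  have "(\<exists>m\<in>M. (s, m) \<in> ?R\<^sup>*) \<or> (\<exists>x. z = Some x \<and> (s, x) \<in> ?R\<^sup>*)"
    if "(Some s, z) \<in> ?Q\<^sup>*" for z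
    using that
  proof (induction rule: rtrancl_induct)
    case (step y z)
    show ?case
    proof (cases "\<exists>m\<in>M. (s, m) \<in> ?R\<^sup>*")
      case False
      with step.IH obtain x where y: "y = Some x" and sx: "(s, x) \<in> ?R\<^sup>*"
        by auto
      show ?thesis
      proof (cases z)
        case None
        with step.hyps(2) y obtain m where "m \<in> M" and "(x, m) \<in> ?R"
          using assms(1,2) by (auto simp: star_V_def star_E_def mon_nbrs_def)
        then show ?thesis
          using rtrancl_into_rtrancl[OF sx] by blast
      next
        case (Some w)
        with step.hyps(2) y have "(x, w) \<in> ?R"
          by (auto simp: star_V_def star_E_def)
        then have "(s, w) \<in> ?R\<^sup>*"
          by (rule rtrancl_into_rtrancl[OF sx])
        then show ?thesis
          using Some by blast
      qed
    qed simp
  qed simp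
  moreover have "(Some s, None) \<in> ?Q\<^sup>*" and "s \<in> V - C"
    using assms(3) unfolding reach_def star_V_def by auto
  ultimately show ?thesis
    unfolding reach_def by blast
qed

lemma less_min_cut_star_iff:
  assumes "ugraph V E" and "M \<subseteq> V" and "s \<in> V - M" and "q < card (V - M)"
  shows "q < min_cut (star_V V M) (star_E V E M) (Some s) None \<longleftrightarrow>
    (\<forall>V' \<subseteq> V - M - {s}. card V' \<le> q \<longrightarrow> (\<exists>m\<in>M. reach (V - V') E s m))"
proof (cases "star_E V E M (Some s) None")
  txt \<open>For adjacent nodes the cut size is \<open>|V(\<G>\<^sup>*) - {None}| = |V - M|\<close> by convention;
    the bound on \<open>q\<close> is exactly what makes this agree with the other side.\<close>
  case True
  then obtain m where m: "m \<in> M" "E s m"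
    by (auto simp: star_E_def mon_nbrs_def)
  have "reach (V - V') E s m" if "V' \<subseteq> V - M - {s}" for V'
    using that m assms(2,3) unfolding reach_def by auto
  moreover have "min_cut (star_V V M) (star_E V E M) (Some s) None = card (V - M)"
    using True unfolding min_cut_def star_V_def by (simp add: card_image)
  ultimately show ?thesis
    using m(1) assms(4) by auto
next
  case False
  have "star_V V M - {Some s, None} = Some ` (V - M - {s})"
    unfolding star_V_def by auto
  then have "q < min_cut (star_V V M) (star_E V E M) (Some s) None \<longleftrightarrow>
    (\<forall>V' \<subseteq> V - M - {s}. card V' \<le> q \<longrightarrow>
      reach (star_V V M - Some ` V') (star_E V E M) (Some s) None)"
    using less_min_cut_iff[of "star_E V E M" "Some s" None] False
    by (simp add: all_subset_image card_image)
  also have "\<dots> \<longleftrightarrow> (\<forall>V' \<subseteq> V - M - {s}. card V' \<le> q \<longrightarrow> (\<exists>m\<in>M. reach (V - V') E s m))"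
  proof -
    have "reach (star_V V M - Some ` V') (star_E V E M) (Some s) None \<longleftrightarrow>
      (\<exists>m\<in>M. reach (V - V') E s m)" if "V' \<subseteq> V - M - {s}" for V'
      using that assms(1-3) reach_star_if_reach_monitor[of V E V' M s]
        reach_monitor_if_reach_star[of M V V' E s] by blast
    then show ?thesis by simp
  qed
  finally show ?thesis .
qed

theorem lemma4:
  fixes V :: "'a set" and E :: "'a \<Rightarrow> 'a \<Rightarrow> bool" and M S :: "'a set" and q :: nat
  assumes "ugraph V E" and "connected_graph V E"
    and "M \<subseteq> V"
    and "S \<subseteq> V - M" and "S \<noteq> {}"
    and "q \<le> card (V - M) - 1"
  shows "(\<forall>V'. V' \<subseteq> V - M \<and> card V' \<le> q \<longrightarrow>
            (\<forall>s\<in>S - V'. \<exists>m\<in>M. reach (V - V') E s m))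
         \<longleftrightarrow> Gamma (star_V V M) (star_E V E M) (Some ` S) None \<ge> q + 1"
proof -
  have "finite (V - M)"
    using assms(1) unfolding ugraph_def by simp
  moreover have "V - M \<noteq> {}"
    using assms(4,5) by blast
  ultimately have "0 < card (V - M)"
    using card_gt_0_iff by blast
  then have "q < card (V - M)"
    using assms(6) by linarith
  have "finite S"
    using \<open>finite (V - M)\<close> assms(4) by (rule finite_subset[rotated])
  have "(\<forall>V'. V' \<subseteq> V - M \<and> card V' \<le> q \<longrightarrow> (\<forall>s\<in>S - V'. \<exists>m\<in>M. reach (V - V') E s m))
    \<longleftrightarrow> (\<forall>s\<in>S. \<forall>V' \<subseteq> V - M - {s}. card V' \<le> q \<longrightarrow> (\<exists>m\<in>M. reach (V - V') E s m))"
    unfolding subset_Diff_insert by blast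
  also have "\<dots> \<longleftrightarrow> (\<forall>s\<in>S. q < min_cut (star_V V M) (star_E V E M) (Some s) None)"
    using less_min_cut_star_iff[OF assms(1,3) _ \<open>q < card (V - M)\<close>] assms(4)
    by (simp add: subset_iff)
  also have "\<dots> \<longleftrightarrow> Gamma (star_V V M) (star_E V E M) (Some ` S) None \<ge> q + 1"
    unfolding Gamma_def using \<open>finite S\<close> assms(5) by (simp add: Suc_le_eq)
  finally show ?thesis .
qed

end
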